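(* Let $\Omega=\{1,\dots,n\}$ be a finite ground set, let $\hat f:2^\Omega\to\mathbb{R}$ be any set function, let $b>0$ be a budget and let $c_i$, $i\in\Omega$, be costs with $0<c_i\le b$ for all $i$. Run the following procedure: set $X_1\leftarrow\emptyset$ and $k\leftarrow\arg\min_{i\in\Omega}\hat f(\{i\})/c_i$; while $c_k\le b-\sum_{i\in X_1}c_i$, set $X_1\leftarrow X_1\cup\{k\}$ and $k\leftarrow\arg\min_{i\in\Omega\setminus X_1}\hat f(X_1\cup\{i\})/c_i$ (ties broken arbitrarily); when the loop stops, set $a\leftarrow k$. Let $X_{\mathrm{greedy1}}=X_1$ and $X_{\mathrm{greedy1a}}=X_1\cup\{a\}$, and define $$\beta=1-\prod_{i\in X_{\mathrm{greedy1}}}\Big(1-\frac{c_i}{b}\Big),\qquad \beta_a=1-\prod_{i\in X_{\mathrm{greedy1a}}}\Big(1-\frac{c_i}{b}\Big).$$ Let $\gamma\in(0,1]$ be such that $\sum_{i\in X_{\mathrm{greedy1}}}c_i=\gamma b$. Then $\beta\in(1-e^{-\gamma},1]$ and $\beta_a\in(1-\gamma e^{-\gamma},1]$.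
   Context: This is the first phase of a cost-effective forward greedy selection for budget-constrained minimization of $\hat f$ over sets $X$ with $\sum_{i\in X}c_i\le b$; $\gamma$ is the fraction of the budget used by the set $X_1$ produced by that phase, and $a$ is the element that the greedy rule would add next but which no longer fits the remaining budget. *)

theory Defs
  imports Complex_Main
begin

text \<open>The list xs records the elements added to X_1 in order; a is the element
  the greedy rule selects next but which no longer fits. Ties are broken
  arbitrarily (any argmin may be chosen).\<close>

definition greedy_phase1 ::
  "'a set \<Rightarrow> ('a set \<Rightarrow> real) \<Rightarrow> ('a \<Rightarrow> real) \<Rightarrow> real \<Rightarrow> 'a list \<Rightarrow> 'a \<Rightarrow> bool" where
  "greedy_phase1 \<Omega> f c b xs a \<longleftrightarrow>
     (\<forall>j < length xs.
        is_arg_min (\<lambda>i. f (insert i (set (take j xs))) / c i)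
                   (\<lambda>i. i \<in> \<Omega> - set (take j xs)) (xs ! j)
      \<and> c (xs ! j) \<le> b - sum c (set (take j xs)))
   \<and> is_arg_min (\<lambda>i. f (insert i (set xs)) / c i) (\<lambda>i. i \<in> \<Omega> - set xs) a
   \<and> c a > b - sum c (set xs)"

end

theory Submission
  imports Defs
begin

(* Since 1 - x < exp (-x) for x > 0, the product of the factors 1 - c i / b over X_1 is below
   exp (- sum c X_1 / b) = exp (- gamma). The stopping element a overflows the remaining budget
   (1 - gamma) b, so its factor 1 - c a / b lies in [0, gamma), which gives the bound for beta_a. *)

lemma prod_one_minus_less_exp_neg_sum:
  fixes x :: "'a \<Rightarrow> real"
  assumes "finite S" "S \<noteq> {}" "\<forall>i\<in>S. 0 < x i \<and> x i \<le> 1"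
  shows "(\<Prod>i\<in>S. 1 - x i) < exp (- sum x S)"
  using assms
proof (induction S rule: finite_ne_induct)
  case (singleton i)
  then show ?case using exp_minus_greater[of "x i"] by simp
next
  case (insert i F)
  have "(\<Prod>j\<in>insert i F. 1 - x j) = (1 - x i) * (\<Prod>j\<in>F. 1 - x j)"
    using insert.hyps by simp
  also have "\<dots> \<le> exp (- x i) * (\<Prod>j\<in>F. 1 - x j)"
    using insert.prems by (intro mult_right_mono exp_minus_ge prod_nonneg) auto
  also have "\<dots> < exp (- x i) * exp (- sum x F)"
    using insert by simp
  also have "\<dots> = exp (- sum x (insert i F))"
    using insert.hyps by (simp add: exp_add[symmetric])
  finally show ?case .
qed

lemma greedy_phase1_set_subset:
  assumes "greedy_phase1 \<Omega> f c b xs a"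
  shows "set xs \<subseteq> \<Omega>"
proof
  fix x assume "x \<in> set xs"
  then obtain j where "j < length xs" "xs ! j = x" by (auto simp: in_set_conv_nth)
  then show "x \<in> \<Omega>" using assms unfolding greedy_phase1_def is_arg_min_def by auto
qed

lemma greedy_phase1_overflow:
  assumes "greedy_phase1 \<Omega> f c b xs a"
  shows "a \<in> \<Omega>" "a \<notin> set xs" "b - sum c (set xs) < c a"
  using assms unfolding greedy_phase1_def is_arg_min_def by auto

theorem proposition3:
  fixes n :: nat and f :: "nat set \<Rightarrow> real" and c :: "nat \<Rightarrow> real"
    and b \<gamma> :: real and xs :: "nat list" and a :: nat
  assumes "b > 0"
    and "\<forall>i\<in>{1..n}. 0 < c i \<and> c i \<le> b"
    and "greedy_phase1 {1..n} f c b xs a"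
    and "\<gamma> \<in> {0<..1}"
    and "sum c (set xs) = \<gamma> * b"
  shows "1 - (\<Prod>i\<in>set xs. 1 - c i / b) \<in> {1 - exp (- \<gamma>)<..1}
       \<and> 1 - (\<Prod>i\<in>insert a (set xs). 1 - c i / b) \<in> {1 - \<gamma> * exp (- \<gamma>)<..1}"
proof -
  define P where "P = (\<Prod>i\<in>set xs. 1 - c i / b)"
  define t where "t = 1 - c a / b"
  have ratios: "\<forall>i\<in>set xs. 0 < c i / b \<and> c i / b \<le> 1"
    using greedy_phase1_set_subset[OF assms(3)] assms(1,2) by auto
  have "set xs \<noteq> {}" using assms(1,4,5) by auto
  then have P_less: "P < exp (- \<gamma>)"
    using prod_one_minus_less_exp_neg_sum[OF _ _ ratios] assms(1,5)
    by (simp add: P_def sum_divide_distrib[symmetric])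
  have P_nonneg: "0 \<le> P" unfolding P_def using ratios by (intro prod_nonneg) auto
  note overflow = greedy_phase1_overflow[OF assms(3)]
  have t_nonneg: "0 \<le> t" using overflow(1) assms(1,2) by (simp add: t_def)
  have t_less: "t < \<gamma>" using overflow(3) assms(1,5) by (simp add: t_def field_simps)
  have "t * P \<le> t * exp (- \<gamma>)" using P_less t_nonneg by (simp add: mult_left_mono)
  also have "\<dots> < \<gamma> * exp (- \<gamma>)" using t_less by simp
  finally have "t * P < \<gamma> * exp (- \<gamma>)" .
  moreover have "(\<Prod>i\<in>insert a (set xs). 1 - c i / b) = t * P"
    using overflow(2) by (simp add: P_def t_def)
  ultimately show ?thesis
    using P_less P_nonneg t_nonneg by (simp add: P_def[symmetric])
qed

end
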